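(* Let $\mathbb{P}$ be a pre-Pawlikowski lattice satisfying $\mathsf{S}_1(\mathbb{V}_1,\mathbb{V}_1)$. Let $(F_n)_{n\in\omega}$ be a sequence of finite subsets of $\mathbb{P}$ such that for every $p\in\mathbb{P}\setminus\{1\}$ there are infinitely many $n$ with $\sup F_n\not\leq p$. Then there are elements $f_n\in F_n$, $n\in\omega$, such that $\sup_{n\in\omega}f_n=1$.
   Context: A lattice is a poset where any two elements have a supremum and an infimum; it is bounded if it has a minimum $0$ and a maximum $1$. A prime element is $q\neq 1$ with: $a\wedge b\leq q$ implies $a\leq q$ or $b\leq q$. Enough prime elements: whenever $a\not\leq b$ there is a prime $q$ with $b\leq q$, $a\not\leq q$. A pre-Pawlikowski lattice is a bounded lattice with enough prime elements. $\mathbb{V}_1$ is the family of subsets $A\subseteq\mathbb{P}$ with $\sup A=1$. $\mathsf{S}_1(\mathbb{V}_1,\mathbb{V}_1)$ means: for every sequence $(A_n)_{n\in\omega}$ of members of $\mathbb{V}_1$ there are $a_n\in A_n$ with $\sup\{a_n:n\in\omega\}=1$. For a finite set $F$, $\sup F$ denotes its join. *)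

theory Defs
  imports Main
begin

definition prime_elem :: "'a::bounded_lattice \<Rightarrow> bool" where
  "prime_elem q \<longleftrightarrow> q \<noteq> top \<and> (\<forall>a b. inf a b \<le> q \<longrightarrow> a \<le> q \<or> b \<le> q)"

definition enough_primes :: "'a::bounded_lattice itself \<Rightarrow> bool" where
  "enough_primes _ \<longleftrightarrow>
     (\<forall>a b::'a. \<not> a \<le> b \<longrightarrow> (\<exists>q. prime_elem q \<and> b \<le> q \<and> \<not> a \<le> q))"

text \<open>sup A = 1 (for a possibly infinite A in a not necessarily complete lattice):
  1 is the least upper bound of A, i.e. the only upper bound of A is 1.\<close>
definition sup_is_top :: "'a::bounded_lattice set \<Rightarrow> bool" where
  "sup_is_top A \<longleftrightarrow> (\<forall>u. (\<forall>a\<in>A. a \<le> u) \<longrightarrow> u = top)"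

definition V1 :: "'a::bounded_lattice set set" where
  "V1 = {A. sup_is_top A}"

definition S1_V1_V1 :: "'a::bounded_lattice itself \<Rightarrow> bool" where
  "S1_V1_V1 _ \<longleftrightarrow>
     (\<forall>A :: nat \<Rightarrow> 'a set. (\<forall>n. A n \<in> V1) \<longrightarrow>
        (\<exists>a. (\<forall>n. a n \<in> A n) \<and> range a \<in> V1))"

definition fin_sup :: "'a::bounded_lattice set \<Rightarrow> 'a" where
  "fin_sup F = Finite_Set.fold sup bot F"

end

theory Submission
  imports Defs
begin

text \<open>For every k, the elements lying below some member of F n for more than k indices n have
  supremum 1: given a prime q, pick k+1 indices n with fin_sup (F n) not below q and members
  of F n not below q; by primality their meet is not below q either. Selection principle
  S1(V1,V1) picks one such element e k for every k, and since the k-th set of indices has more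
  than k elements the indices can be chosen injectively, one for each k. Placing above e k
  a member of F at the k-th chosen index yields a selection f that dominates every e k,
  hence has supremum 1.\<close>

lemma fin_sup_insert:
  fixes F :: "'a::bounded_lattice set"
  assumes "finite F"
  shows "fin_sup (insert x F) = sup x (fin_sup F)"
proof -
  interpret comp_fun_idem "sup :: 'a \<Rightarrow> 'a \<Rightarrow> 'a" by (fact comp_fun_idem_sup)
  show ?thesis unfolding fin_sup_def using assms by (simp add: fold_insert_idem)
qed

lemma fin_sup_least:
  fixes F :: "'a::bounded_lattice set"
  assumes "finite F" and "\<And>x. x \<in> F \<Longrightarrow> x \<le> u"
  shows "fin_sup F \<le> u"
  using assms
proof (induction F rule: finite_induct)
  case empty
  then show ?case by (simp add: fin_sup_def)
next
  case (insert x F)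
  then show ?case by (simp add: fin_sup_insert)
qed

lemma prime_elem_lower_bound_not_le:
  fixes q :: "'a::bounded_lattice"
  assumes "finite A" and "prime_elem q" and "\<And>a. a \<in> A \<Longrightarrow> \<not> a \<le> q"
  obtains x where "\<And>a. a \<in> A \<Longrightarrow> x \<le> a" and "\<not> x \<le> q"
proof -
  have "\<exists>x. (\<forall>a\<in>A. x \<le> a) \<and> \<not> x \<le> q"
    using assms
  proof (induction A rule: finite_induct)
    case empty
    then show ?case unfolding prime_elem_def by (metis empty_iff top.extremum_unique)
  next
    case (insert a A)
    then obtain x where x: "\<forall>b\<in>A. x \<le> b" "\<not> x \<le> q" by auto
    with insert.prems have "\<not> inf x a \<le> q" unfolding prime_elem_def by blast
    with x(1) show ?case by (intro exI[of _ "inf x a"]) (auto intro: le_infI1)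
  qed
  with that show thesis by blast
qed

lemma sup_is_top_if_not_below_primes:
  fixes S :: "'a::bounded_lattice set"
  assumes "enough_primes TYPE('a)" and "\<And>q. prime_elem q \<Longrightarrow> \<exists>x\<in>S. \<not> x \<le> q"
  shows "sup_is_top S"
  unfolding sup_is_top_def
proof (intro allI impI)
  fix u assume upper: "\<forall>x\<in>S. x \<le> u"
  show "u = top"
  proof (rule ccontr)
    assume "u \<noteq> top"
    then have "\<not> top \<le> u" using top.extremum_unique by blast
    then obtain q where "prime_elem q" "u \<le> q"
      using assms(1) unfolding enough_primes_def by blast
    with assms(2) upper show False by (meson order_trans)
  qed
qed

lemma sup_is_top_if_dominated:
  assumes "sup_is_top A" and "\<And>a. a \<in> A \<Longrightarrow> \<exists>b\<in>B. a \<le> b"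
  shows "sup_is_top B"
  using assms unfolding sup_is_top_def by (meson order_trans)

text \<open>Greedy choice: at stage k at most k indices are taken, so J k still has a free one.\<close>

lemma inj_choice_from_large_sets:
  fixes J :: "nat \<Rightarrow> 'b set"
  assumes "\<And>k. finite (J k)" and "\<And>k. k < card (J k)"
  obtains r where "inj r" and "\<And>k. r k \<in> J k"
proof -
  define pick where "pick k X = (SOME n. n \<in> J k \<and> n \<notin> X)" for k X
  define R where "R = rec_nat {} (\<lambda>k X. insert (pick k X) X)"
  have R_0: "R 0 = {}" and R_Suc: "R (Suc k) = insert (pick k (R k)) (R k)" for k
    by (simp_all add: R_def)
  have R_small: "finite (R k) \<and> card (R k) \<le> k" for k
    by (induction k) (simp_all add: R_0 R_Suc card_insert_if)
  define r where "r k = pick k (R k)" for k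
  have r_new: "r k \<in> J k \<and> r k \<notin> R k" for k
  proof -
    have "\<not> J k \<subseteq> R k"
    proof
      assume "J k \<subseteq> R k"
      then have "card (J k) \<le> card (R k)" using R_small card_mono by blast
      with R_small[of k] assms(2)[of k] show False by simp
    qed
    then have "\<exists>n. n \<in> J k \<and> n \<notin> R k" by blast
    then show ?thesis unfolding r_def pick_def by (rule someI_ex)
  qed
  have r_taken: "i < k \<Longrightarrow> r i \<in> R k" for i k
  proof (induction k)
    case (Suc k)
    then show ?case unfolding R_Suc r_def[symmetric] by (auto simp: less_Suc_eq)
  qed simp
  have "inj r"
  proof (rule injI)
    fix i k assume "r i = r k"
    with r_new r_taken show "i = k" by (metis linorder_neqE_nat)
  qed
  with r_new that show thesis by blast
qed

lemma choice_extending_inj: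
  assumes "inj r" and "\<And>n. F n \<noteq> {}" and "\<And>k. g k \<in> F (r k)"
  obtains f where "\<And>n. f n \<in> F n" and "\<And>k. f (r k) = g k"
proof -
  define f where "f n = (if n \<in> range r then g (inv r n) else (SOME x. x \<in> F n))" for n
  have "f (r k) = g k" for k
    unfolding f_def using assms(1) by simp
  moreover have "f n \<in> F n" for n
    using assms unfolding f_def by (auto simp: some_in_eq)
  ultimately show thesis using that by blast
qed

definition below_more_than :: "(nat \<Rightarrow> 'a::bounded_lattice set) \<Rightarrow> nat \<Rightarrow> 'a set" where
  "below_more_than F k = {x. \<exists>J. finite J \<and> k < card J \<and> (\<forall>n\<in>J. \<exists>y\<in>F n. x \<le> y)}"

lemma below_more_than_in_V1:
  fixes F :: "nat \<Rightarrow> 'a::bounded_lattice set"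
  assumes "enough_primes TYPE('a)"
    and "\<And>n. finite (F n)"
    and "\<And>p::'a. p \<noteq> top \<Longrightarrow> infinite {n. \<not> fin_sup (F n) \<le> p}"
  shows "below_more_than F k \<in> V1"
  unfolding V1_def
proof (intro CollectI sup_is_top_if_not_below_primes[OF assms(1)])
  fix q :: 'a assume q: "prime_elem q"
  then have "infinite {n. \<not> fin_sup (F n) \<le> q}"
    by (intro assms(3)) (simp add: prime_elem_def)
  then obtain J where J: "J \<subseteq> {n. \<not> fin_sup (F n) \<le> q}" "finite J" "card J = Suc k"
    using infinite_arbitrarily_large by blast
  have "\<forall>n\<in>J. \<exists>y\<in>F n. \<not> y \<le> q"
    using J(1) assms(2) fin_sup_least by blast
  then obtain h where h: "\<And>n. n \<in> J \<Longrightarrow> h n \<in> F n \<and> \<not> h n \<le> q" by metis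
  obtain x where x: "\<And>a. a \<in> h ` J \<Longrightarrow> x \<le> a" "\<not> x \<le> q"
    by (rule prime_elem_lower_bound_not_le[of "h ` J" q]) (use J(2) q h in auto)
  have "x \<in> below_more_than F k"
    unfolding below_more_than_def using J(2,3) h x(1) by (auto intro!: exI[of _ J])
  with x(2) show "\<exists>x\<in>below_more_than F k. \<not> x \<le> q" by blast
qed

theorem lemma2p3:
  fixes F :: "nat \<Rightarrow> 'a::bounded_lattice set"
  assumes "enough_primes TYPE('a)"
    and "S1_V1_V1 TYPE('a)"
    and "\<And>n. finite (F n)"
    and "\<And>n. F n \<noteq> {}"
    and "\<And>p::'a. p \<noteq> top \<Longrightarrow> infinite {n. \<not> fin_sup (F n) \<le> p}"
  shows "\<exists>f. (\<forall>n. f n \<in> F n) \<and> range f \<in> V1"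
proof -
  obtain e where e: "\<And>k. e k \<in> below_more_than F k" and "range e \<in> V1"
    using assms(2) below_more_than_in_V1[OF assms(1,3,5)] unfolding S1_V1_V1_def by blast
  have "\<forall>k. \<exists>J. finite J \<and> k < card J \<and> (\<forall>n\<in>J. \<exists>y\<in>F n. e k \<le> y)"
    using e unfolding below_more_than_def by blast
  from choice[OF this] obtain J where J: "\<And>k. finite (J k)" "\<And>k. k < card (J k)"
    "\<And>k n. n \<in> J k \<Longrightarrow> \<exists>y\<in>F n. e k \<le> y"
    by blast
  obtain r where "inj r" and r: "\<And>k. r k \<in> J k"
    using inj_choice_from_large_sets[OF J(1,2)] by blast
  have "\<forall>k. \<exists>y. y \<in> F (r k) \<and> e k \<le> y"
    using J(3)[OF r] by blast
  from choice[OF this] obtain g where g: "\<And>k. g k \<in> F (r k)" "\<And>k. e k \<le> g k"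
    by blast
  obtain f where f: "\<And>n. f n \<in> F n" "\<And>k. f (r k) = g k"
    using choice_extending_inj[of r F g, OF \<open>inj r\<close> assms(4) g(1)] by blast
  have "\<And>a. a \<in> range e \<Longrightarrow> \<exists>b\<in>range f. a \<le> b"
    using g(2) f(2) by (metis rangeE rangeI)
  then have "sup_is_top (range f)"
    using \<open>range e \<in> V1\<close> sup_is_top_if_dominated unfolding V1_def by blast
  with f(1) show ?thesis unfolding V1_def by blast
qed

end
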